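(* Let $X_c$ be a Banach space, $A_c\in\mathcal L(X_c,X_c)$ invertible, and let $L_g\ge0$, $0\le L_c<1$, with $L_r,L_t,L_{-1}$ defined below, and assume $L_r<\|A_c^{-1}\|^{-1}$. Let $r,\tilde r\in C^2_b(X_c,X_c)$ with $\|Dr\|_0\le L_r$ and $\|D\tilde r\|_0\le L_r$. Let $X,Y$ be Banach spaces, $h\in C^2_b(Y,X)$ and $f_1,f_2\in C^2_b(X_c,Y)$. Then: (i) $\|h\circ f_1\circ(A_c+r)^{-1}-h\circ f_2\circ(A_c+\tilde r)^{-1}\|_0\le\|Dh\|_0\big(\|f_1-f_2\|_0+L_{-1}\|Df_2\|_0\|r-\tilde r\|_0\big)$. (ii) If moreover $\|D^2\tilde r\|_0\le\delta$ for some $\delta>0$, then $\|D[h\circ f_1\circ(A_c+r)^{-1}]-D[h\circ f_2\circ(A_c+\tilde r)^{-1}]\|_0\le L_{-1}\big(\|Dh\|_0+\|D^2h\|_0\|Df_2\|_0\big)\|f_1-f_2\|_1+L_{-1}^2\big(\|D^2h\|_0\|Df_2\|_0^2+\|Dh\|_0\|D^2f_2\|_0\big)\|r-\tilde r\|_1+L_{-1}^2\|Dh\|_0\|Df_1\|_0(1+L_{-1}\delta)\|r-\tilde r\|_1$.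
   Context: $\mathcal L(Y,Z)$ denotes bounded linear operators with operator norm. $C^k_b(Y,Z)$ is the Banach space of $C^k$ maps $f:Y\to Z$ with $\|f\|_k:=\max_{0\le j\le k}\sup_y\|D^jf(y)\|<\infty$. Constants: $L_r:=\frac{L_g+L_c(2\|A_c\|+L_g)}{1-L_c}$, $L_t:=\frac{\|A_c^{-1}\|^2L_r}{1-\|A_c^{-1}\|L_r}$, $L_{-1}:=\|A_c^{-1}\|+L_t$. (Under these hypotheses $A_c+r$ and $A_c+\tilde r$ are global diffeomorphisms of $X_c$.) *)

theory Defs
  imports "HOL-Analysis.Analysis"
begin

definition Dop :: "('a::real_normed_vector \<Rightarrow> 'b::real_normed_vector) \<Rightarrow> 'a \<Rightarrow> ('a \<Rightarrow>\<^sub>L 'b)" where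
  "Dop f x = Blinfun (frechet_derivative f (at x))"

definition supn :: "('a \<Rightarrow> 'b::real_normed_vector) \<Rightarrow> real" where
  "supn f = (SUP x. norm (f x))"

definition norm1 :: "('a::real_normed_vector \<Rightarrow> 'b::real_normed_vector) \<Rightarrow> real" where
  "norm1 f = max (supn f) (supn (Dop f))"

definition C2b :: "('a::real_normed_vector \<Rightarrow> 'b::real_normed_vector) \<Rightarrow> bool" where
  "C2b f \<longleftrightarrow> (\<forall>x. f differentiable (at x)) \<and> (\<forall>x. Dop f differentiable (at x))
     \<and> continuous_on UNIV (Dop (Dop f))
     \<and> bounded (range f) \<and> bounded (range (Dop f)) \<and> bounded (range (Dop (Dop f)))"

definition Lr_const :: "real \<Rightarrow> real \<Rightarrow> real \<Rightarrow> real" where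
  "Lr_const Lg Lc nA = (Lg + Lc * (2 * nA + Lg)) / (1 - Lc)"

definition Lt_const :: "real \<Rightarrow> real \<Rightarrow> real" where
  "Lt_const nAi Lr = (nAi^2 * Lr) / (1 - nAi * Lr)"

definition Lm1_const :: "real \<Rightarrow> real \<Rightarrow> real" where
  "Lm1_const nAi Lr = nAi + Lt_const nAi Lr"

end

theory Submission
  imports Defs
begin

text \<open>If \<open>q\<close> is \<open>L\<close>-Lipschitz and \<open>\<parallel>A\<^sup>-\<^sup>1\<parallel> L < 1\<close>, then \<open>A + q\<close> is a bijection
  (contraction principle) whose inverse is Lipschitz with constant \<open>L\<^sub>-\<^sub>1 = \<parallel>A\<^sup>-\<^sup>1\<parallel> / (1 - \<parallel>A\<^sup>-\<^sup>1\<parallel> L)\<close>, and by the inverse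
  function rule its derivative at \<open>y\<close> is the inverse \<open>M\<close> of \<open>A + Dq(x)\<close>, \<open>x = (A + q)\<^sup>-\<^sup>1 y\<close>, again of
  norm at most \<open>L\<^sub>-\<^sub>1\<close>. For \<open>x = (A + r)\<^sup>-\<^sup>1 y\<close> and \<open>x' = (A + r\<^sub>t)\<^sup>-\<^sup>1 y\<close> the same estimate gives
  \<open>\<parallel>x - x'\<parallel> \<le> L\<^sub>-\<^sub>1 \<parallel>r - r\<^sub>t\<parallel>\<^sub>0\<close>, and (i) follows from the Lipschitz bounds of \<open>h\<close> and \<open>f\<^sub>2\<close>.
  For (ii) the chain rule writes the two derivatives as \<open>Dh(f\<^sub>1 x) Df\<^sub>1(x) M\<close> and \<open>Dh(f\<^sub>2 x') Df\<^sub>2(x') N\<close>;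
  telescoping the triple products and the identity \<open>M - N = M (Dr\<^sub>t(x') - Dr(x)) N\<close> reduce the
  difference to the same pointwise estimates.\<close>

lemma supn_upper: "bounded (range f) \<Longrightarrow> norm (f x) \<le> supn f"
  unfolding supn_def by (rule cSUP_upper) (auto simp: bounded_iff bdd_above_def)

lemma supn_least: "(\<And>x. norm (f x) \<le> B) \<Longrightarrow> supn f \<le> B"
  unfolding supn_def by (rule cSUP_least) auto

lemma bounded_range_diff:
  fixes f g :: "'a \<Rightarrow> 'b::real_normed_vector"
  assumes "bounded (range f)" "bounded (range g)"
  shows "bounded (range (\<lambda>x. f x - g x))"
proof -
  obtain B1 B2 where "\<And>x. norm (f x) \<le> B1" "\<And>x. norm (g x) \<le> B2"
    using assms by (auto simp: bounded_iff)
  then have "norm (f x - g x) \<le> B1 + B2" for x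
    by (meson add_mono norm_triangle_ineq4 order_trans)
  then show ?thesis by (auto simp: bounded_iff)
qed

lemma has_derivative_Dop:
  assumes "f differentiable (at x)"
  shows "(f has_derivative blinfun_apply (Dop f x)) (at x)"
proof -
  have "(f has_derivative frechet_derivative f (at x)) (at x)"
    using assms frechet_derivative_works by blast
  then show ?thesis
    unfolding Dop_def by (simp add: bounded_linear_Blinfun_apply has_derivative_bounded_linear)
qed

lemma Dop_eqI: "(f has_derivative F) (at x) \<Longrightarrow> Dop f x = Blinfun F"
  unfolding Dop_def by (simp add: frechet_derivative_at[symmetric])

lemma Dop_diff:
  assumes "f differentiable (at x)" "g differentiable (at x)"
  shows "Dop (\<lambda>x. f x - g x) x = Dop f x - Dop g x"
proof -
  have "((\<lambda>x. f x - g x) has_derivative blinfun_apply (Dop f x - Dop g x)) (at x)"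
    using has_derivative_diff[OF has_derivative_Dop has_derivative_Dop] assms
    by (simp add: minus_blinfun.rep_eq fun_diff_def)
  then show ?thesis by (simp add: Dop_eqI blinfun_apply_inverse)
qed

lemma Dop_compose3:
  assumes "(g has_derivative blinfun_apply M) (at y)"
    and "f differentiable (at (g y))" and "h differentiable (at (f (g y)))"
  shows "Dop (\<lambda>z. h (f (g z))) y = Dop h (f (g y)) o\<^sub>L Dop f (g y) o\<^sub>L M"
proof -
  have "((\<lambda>z. h (f (g z))) has_derivative blinfun_apply (Dop h (f (g y)) o\<^sub>L Dop f (g y) o\<^sub>L M)) (at y)"
    using has_derivative_compose[OF has_derivative_compose[OF assms(1) has_derivative_Dop[OF assms(2)]]
        has_derivative_Dop[OF assms(3)]]
    by (simp add: blinfun_compose.rep_eq comp_def)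
  then show ?thesis by (simp add: Dop_eqI blinfun_apply_inverse)
qed

lemma norm_diff_le_of_Dop_bound:
  assumes "\<forall>x. f differentiable (at x)" "\<And>x. norm (Dop f x) \<le> B"
  shows "norm (f x - f y) \<le> B * norm (x - y)"
  using assms has_derivative_Dop
  by (intro differentiable_bound[of UNIV f "\<lambda>x. blinfun_apply (Dop f x)"])
     (auto simp: norm_blinfun.rep_eq[symmetric])

lemma
  assumes "C2b f"
  shows C2b_differentiable: "f differentiable (at x)"
    and C2b_Dop_differentiable: "Dop f differentiable (at x)"
    and C2b_norm_Dop_le_supn: "norm (Dop f x) \<le> supn (Dop f)"
    and C2b_norm_Dop2_le_supn: "norm (Dop (Dop f) x) \<le> supn (Dop (Dop f))"
  using assms supn_upper unfolding C2b_def by auto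

lemma
  assumes "C2b f"
  shows C2b_supn_Dop_nonneg: "0 \<le> supn (Dop f)"
    and C2b_supn_Dop2_nonneg: "0 \<le> supn (Dop (Dop f))"
  using C2b_norm_Dop_le_supn[OF assms] C2b_norm_Dop2_le_supn[OF assms] norm_ge_zero order_trans
  by blast+

lemma
  assumes "C2b f"
  shows C2b_lipschitz: "norm (f x - f y) \<le> supn (Dop f) * norm (x - y)"
    and C2b_Dop_lipschitz: "norm (Dop f x - Dop f y) \<le> supn (Dop (Dop f)) * norm (x - y)"
  using assms by (auto intro!: norm_diff_le_of_Dop_bound C2b_differentiable C2b_Dop_differentiable
      C2b_norm_Dop_le_supn C2b_norm_Dop2_le_supn)

lemma C2b_lipschitz_le:
  assumes "C2b f" "supn (Dop f) \<le> B"
  shows "norm (f x - f y) \<le> B * norm (x - y)"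
  using C2b_lipschitz[OF assms(1)] mult_right_mono[OF assms(2) norm_ge_zero] by (rule order_trans)

lemma C2b_Dop_lipschitz_le:
  assumes "C2b f" "supn (Dop (Dop f)) \<le> B"
  shows "norm (Dop f x - Dop f y) \<le> B * norm (x - y)"
  using C2b_Dop_lipschitz[OF assms(1)] mult_right_mono[OF assms(2) norm_ge_zero] by (rule order_trans)

lemma
  assumes "C2b f" "C2b g"
  shows C2b_diff_le_supn: "norm (f x - g x) \<le> supn (\<lambda>x. f x - g x)"
    and C2b_diff_le_norm1: "norm (f x - g x) \<le> norm1 (\<lambda>x. f x - g x)"
    and C2b_Dop_diff_le_norm1: "norm (Dop f x - Dop g x) \<le> norm1 (\<lambda>x. f x - g x)"
proof -
  have D: "Dop (\<lambda>x. f x - g x) x = Dop f x - Dop g x" for x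
    using assms by (simp add: Dop_diff C2b_differentiable)
  show "norm (f x - g x) \<le> supn (\<lambda>x. f x - g x)"
    using assms by (intro supn_upper bounded_range_diff) (auto simp: C2b_def)
  then show "norm (f x - g x) \<le> norm1 (\<lambda>x. f x - g x)"
    unfolding norm1_def by linarith
  have "norm (Dop f x - Dop g x) \<le> supn (Dop (\<lambda>x. f x - g x))"
    using assms unfolding D by (intro supn_upper bounded_range_diff) (auto simp: C2b_def)
  then show "norm (Dop f x - Dop g x) \<le> norm1 (\<lambda>x. f x - g x)"
    unfolding norm1_def by linarith
qed

lemma norm_diff_two_points_le:
  fixes g g' :: "'a::real_normed_vector \<Rightarrow> 'b::real_normed_vector"
  assumes "norm (g a - g' a) \<le> e" "norm (g' a - g' b) \<le> c * norm (a - b)"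
    and "norm (a - b) \<le> d" "0 \<le> c"
  shows "norm (g a - g' b) \<le> e + c * d"
proof -
  have "norm (g a - g' b) \<le> norm (g a - g' a) + norm (g' a - g' b)"
    using norm_triangle_ineq[of "g a - g' a" "g' a - g' b"] by simp
  also have "\<dots> \<le> e + c * d"
    using assms by (meson add_mono mult_left_mono order_trans)
  finally show ?thesis .
qed

lemma norm_blinfun_compose3_diff_le:
  fixes A A' :: "'b::real_normed_vector \<Rightarrow>\<^sub>L 'c::real_normed_vector"
    and B B' :: "'a::real_normed_vector \<Rightarrow>\<^sub>L 'b" and C C' :: "'d::real_normed_vector \<Rightarrow>\<^sub>L 'a"
  assumes "norm A \<le> a" "norm B \<le> b" "norm (C - C') \<le> c"
    and "norm (B - B') \<le> d" "norm C' \<le> k" "norm (A - A') \<le> e" "norm B' \<le> g"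
  shows "norm ((A o\<^sub>L B o\<^sub>L C) - (A' o\<^sub>L B' o\<^sub>L C')) \<le> a * b * c + a * d * k + e * g * k"
proof -
  have "(A o\<^sub>L B o\<^sub>L C) - (A' o\<^sub>L B' o\<^sub>L C')
      = (A o\<^sub>L B o\<^sub>L (C - C')) + (A o\<^sub>L (B - B') o\<^sub>L C') + ((A - A') o\<^sub>L B' o\<^sub>L C')"
    by (rule blinfun_eqI) (simp add: blinfun.bilinear_simps)
  also have "norm \<dots> \<le> norm A * norm B * norm (C - C') + norm A * norm (B - B') * norm C'
      + norm (A - A') * norm B' * norm C'"
    by (intro order_trans[OF norm_triangle_ineq] add_mono order_trans[OF norm_blinfun_compose]
        mult_right_mono norm_blinfun_compose norm_ge_zero)
  also have "\<dots> \<le> a * b * c + a * d * k + e * g * k"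
    using assms order_trans[OF norm_ge_zero assms(1)] order_trans[OF norm_ge_zero assms(2)]
      order_trans[OF norm_ge_zero assms(4)] order_trans[OF norm_ge_zero assms(6)]
      order_trans[OF norm_ge_zero assms(7)]
    by (intro add_mono mult_mono) auto
  finally show ?thesis .
qed

locale lipschitz_perturbation =
  fixes A Ai :: "'a::banach \<Rightarrow>\<^sub>L 'a" and L :: real
  assumes A_Ai: "A o\<^sub>L Ai = id_blinfun" and Ai_A: "Ai o\<^sub>L A = id_blinfun"
    and L_nonneg: "0 \<le> L" and L_small: "norm Ai * L < 1"
begin

text \<open>\<open>lip_inv\<close> is the constant \<open>L\<^sub>-\<^sub>1 = \<parallel>A\<^sup>-\<^sup>1\<parallel> + L\<^sub>t\<close> of the paper in closed form.\<close>
definition lip_inv :: real where "lip_inv = norm Ai / (1 - norm Ai * L)"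

lemma lip_inv_nonneg: "0 \<le> lip_inv"
  unfolding lip_inv_def using L_small by simp

lemma A_Ai_apply: "A (Ai z) = z" and Ai_A_apply: "Ai (A z) = z"
  using A_Ai Ai_A by (metis blinfun_apply_blinfun_compose id_blinfun.rep_eq)+

lemma norm_le_lip_inv:
  assumes lip: "\<And>x y. norm (q x - q y) \<le> L * norm (x - y)"
  shows "norm (x - y) \<le> lip_inv * norm ((A x + q x) - (A y + q y))"
proof -
  let ?a = "norm Ai"
  have "x - y = Ai ((A x + q x) - (A y + q y)) - Ai (q x - q y)"
    by (simp add: Ai_A_apply blinfun.diff_right blinfun.add_right)
  then have "norm (x - y) \<le> norm (Ai ((A x + q x) - (A y + q y))) + norm (Ai (q x - q y))"
    by (metis norm_triangle_ineq4)
  also have "\<dots> \<le> ?a * norm ((A x + q x) - (A y + q y)) + ?a * (L * norm (x - y))"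
    by (intro add_mono order_trans[OF norm_blinfun] mult_left_mono lip) auto
  finally have "(1 - ?a * L) * norm (x - y) \<le> ?a * norm ((A x + q x) - (A y + q y))"
    by (simp add: algebra_simps)
  then show ?thesis
    unfolding lip_inv_def using L_small by (simp add: field_simps)
qed

lemma bij_add_lipschitz:
  assumes lip: "\<And>x y. norm (q x - q y) \<le> L * norm (x - y)"
  shows "bij (\<lambda>x. A x + q x)"
proof (rule bijI)
  show "inj (\<lambda>x. A x + q x)"
  proof (rule injI)
    fix x y assume "A x + q x = A y + q y"
    then show "x = y" using norm_le_lip_inv[OF lip, of x y] by simp
  qed
  show "surj (\<lambda>x. A x + q x)"
  proof (rule surjI)
    fix y
    have "\<exists>!x. Ai (y - q x) = x"
    proof (rule banach_fix_type[of "norm Ai * L"])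
      show "\<forall>x z. dist (Ai (y - q x)) (Ai (y - q z)) \<le> norm Ai * L * dist x z"
      proof (intro allI)
        fix x z
        have "dist (Ai (y - q x)) (Ai (y - q z)) = norm (Ai (q z - q x))"
          by (simp add: dist_norm blinfun.diff_right[symmetric])
        also have "\<dots> \<le> norm Ai * (L * norm (z - x))"
          by (intro order_trans[OF norm_blinfun] mult_left_mono lip) auto
        finally show "dist (Ai (y - q x)) (Ai (y - q z)) \<le> norm Ai * L * dist x z"
          by (simp add: dist_norm norm_minus_commute mult.assoc)
      qed
    qed (use L_nonneg L_small in auto)
    then obtain x where "Ai (y - q x) = x" by blast
    then have "A x + q x = y"
      using A_Ai_apply by (metis diff_add_cancel)
    then show "A (SOME x. A x + q x = y) + q (SOME x. A x + q x = y) = y"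
      by (rule someI)
  qed
qed

lemma add_inv_apply:
  assumes "\<And>x y. norm (q x - q y) \<le> L * norm (x - y)"
  shows "A (inv (\<lambda>x. A x + q x) y) + q (inv (\<lambda>x. A x + q x) y) = y"
  using surj_f_inv_f[OF bij_is_surj[OF bij_add_lipschitz[OF assms]]] by simp

lemma inv_add_lipschitz:
  assumes "\<And>x y. norm (q x - q y) \<le> L * norm (x - y)"
  shows "norm (inv (\<lambda>x. A x + q x) a - inv (\<lambda>x. A x + q x) b) \<le> lip_inv * norm (a - b)"
  using norm_le_lip_inv[OF assms, of "inv (\<lambda>x. A x + q x) a" "inv (\<lambda>x. A x + q x) b"]
  by (simp add: add_inv_apply[OF assms])

lemma norm_inv_add_diff_le:
  assumes lip_q: "\<And>x y. norm (q x - q y) \<le> L * norm (x - y)"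
    and lip_p: "\<And>x y. norm (p x - p y) \<le> L * norm (x - y)"
    and qp: "\<And>z. norm (q z - p z) \<le> d"
  shows "norm (inv (\<lambda>x. A x + q x) y - inv (\<lambda>x. A x + p x) y) \<le> lip_inv * d"
proof -
  define x x' where "x = inv (\<lambda>x. A x + q x) y" and "x' = inv (\<lambda>x. A x + p x) y"
  have "(A x + q x) - (A x' + q x') = p x' - q x'"
    using add_inv_apply[OF lip_q, of y] add_inv_apply[OF lip_p, of y]
    unfolding x_def x'_def by (simp add: algebra_simps)
  then have "norm (x - x') \<le> lip_inv * norm (q x' - p x')"
    using norm_le_lip_inv[OF lip_q, of x x'] by (metis norm_minus_commute)
  also have "\<dots> \<le> lip_inv * d"
    by (rule mult_left_mono[OF qp lip_inv_nonneg])
  finally show ?thesis unfolding x_def x'_def .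
qed

lemma blinfun_perturbation_inverse:
  fixes B :: "'a \<Rightarrow>\<^sub>L 'a"
  assumes "norm B \<le> L"
  obtains M :: "'a \<Rightarrow>\<^sub>L 'a"
  where "norm M \<le> lip_inv" "\<And>v. M (A v + B v) = v" "\<And>w. A (M w) + B (M w) = w"
proof -
  have lip: "norm (B x - B y) \<le> L * norm (x - y)" for x y
    using norm_blinfun[of B "x - y"] assms
    by (simp add: blinfun.diff_right) (meson mult_right_mono norm_ge_zero order_trans)
  define m where "m = (\<lambda>v. A v + B v)"
  have bij_m: "bij m" unfolding m_def by (rule bij_add_lipschitz[OF lip])
  define mi where "mi = inv m"
  have m_mi: "m (mi w) = w" and mi_m: "mi (m v) = v" for v w
    unfolding mi_def using bij_m by (simp_all add: bij_is_surj surj_f_inv_f bij_is_inj)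
  have "linear m"
    unfolding m_def by (intro linear_compose_add bounded_linear.linear blinfun.bounded_linear_right)
  have "linear mi"
  proof (rule linearI)
    show "mi (b1 + b2) = mi b1 + mi b2" for b1 b2
      using mi_m m_mi linear_add[OF \<open>linear m\<close>] by metis
    show "mi (c *\<^sub>R b) = c *\<^sub>R mi b" for c b
      using mi_m m_mi linear_scale[OF \<open>linear m\<close>] by metis
  qed
  moreover have norm_mi: "norm (mi w) \<le> lip_inv * norm w" for w
    using norm_le_lip_inv[OF lip, of "mi w" 0] m_mi[of w] unfolding m_def by simp
  ultimately have bl: "bounded_linear mi"
    by (intro bounded_linear_intro[where K = lip_inv]) (auto simp: linear_add linear_scale mult.commute)
  show ?thesis
  proof
    show "norm (Blinfun mi) \<le> lip_inv"
      by (rule norm_blinfun_bound[OF lip_inv_nonneg]) (simp add: bl bounded_linear_Blinfun_apply norm_mi)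
  qed (use bl m_mi mi_m in \<open>simp_all add: bounded_linear_Blinfun_apply m_def\<close>)
qed

lemma has_derivative_inv_add:
  fixes q :: "'a \<Rightarrow> 'a" and y :: 'a
  assumes q_diff: "\<forall>x. q differentiable (at x)" and Dq: "\<And>x. norm (Dop q x) \<le> L"
  defines "x \<equiv> inv (\<lambda>x. A x + q x) y"
  obtains M :: "'a \<Rightarrow>\<^sub>L 'a" where "(inv (\<lambda>x. A x + q x) has_derivative blinfun_apply M) (at y)"
    "norm M \<le> lip_inv" "\<And>v. M (A v + Dop q x v) = v" "\<And>w. A (M w) + Dop q x (M w) = w"
proof -
  have lip: "norm (q a - q b) \<le> L * norm (a - b)" for a b
    by (rule norm_diff_le_of_Dop_bound[OF q_diff Dq])
  obtain M :: "'a \<Rightarrow>\<^sub>L 'a"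
    where M: "norm M \<le> lip_inv" "\<And>v. M (A v + Dop q x v) = v" "\<And>w. A (M w) + Dop q x (M w) = w"
    using blinfun_perturbation_inverse[OF Dq] by blast
  have der: "((\<lambda>x. A x + q x) has_derivative (\<lambda>v. A v + Dop q x v)) (at x)"
    using q_diff by (intro has_derivative_add bounded_linear.has_derivative[OF blinfun.bounded_linear_right]
        has_derivative_ident has_derivative_Dop) auto
  have "lip_inv-lipschitz_on UNIV (inv (\<lambda>x. A x + q x))"
    using inv_add_lipschitz[OF lip] lip_inv_nonneg by (intro lipschitz_onI) (auto simp: dist_norm)
  then have cont: "continuous (at y) (inv (\<lambda>x. A x + q x))"
    using lipschitz_on_continuous_on continuous_on_eq_continuous_at by blast
  have left_inv: "blinfun_apply M \<circ> (\<lambda>v. A v + Dop q x v) = id"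
    using M(2) by auto
  have "(inv (\<lambda>x. A x + q x) has_derivative blinfun_apply M) (at y)"
    by (rule has_derivative_inverse_basic[OF der[unfolded x_def] blinfun.bounded_linear_right
          left_inv[unfolded x_def] cont open_UNIV UNIV_I add_inv_apply[OF lip]])
  with M show ?thesis using that by blast
qed

lemma Dop_comp_inv_add:
  fixes q :: "'a \<Rightarrow> 'a" and f :: "'a \<Rightarrow> 'b::real_normed_vector"
    and h :: "'b \<Rightarrow> 'c::real_normed_vector" and y :: 'a
  assumes q: "C2b q" "supn (Dop q) \<le> L" and f: "C2b f" and h: "C2b h"
  defines "x \<equiv> inv (\<lambda>x. A x + q x) y"
  obtains M :: "'a \<Rightarrow>\<^sub>L 'a"
  where "Dop (\<lambda>y. h (f (inv (\<lambda>x. A x + q x) y))) y = Dop h (f x) o\<^sub>L Dop f x o\<^sub>L M"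
    "norm M \<le> lip_inv" "\<And>v. M (A v + Dop q x v) = v" "\<And>w. A (M w) + Dop q x (M w) = w"
proof -
  have q_diff: "\<forall>x. q differentiable (at x)" and Dq: "\<And>x. norm (Dop q x) \<le> L"
    using q by (auto intro: C2b_differentiable order_trans[OF C2b_norm_Dop_le_supn])
  obtain M where der: "(inv (\<lambda>x. A x + q x) has_derivative blinfun_apply M) (at y)"
    and M: "norm M \<le> lip_inv" "\<And>v. M (A v + Dop q x v) = v" "\<And>w. A (M w) + Dop q x (M w) = w"
    by (rule has_derivative_inv_add[OF q_diff Dq, of y]) (simp add: x_def)
  have "Dop (\<lambda>y. h (f (inv (\<lambda>x. A x + q x) y))) y = Dop h (f x) o\<^sub>L Dop f x o\<^sub>L M"
    unfolding x_def using f h by (intro Dop_compose3[OF der] C2b_differentiable)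
  then show ?thesis
    using M by (rule that)
qed

lemma blinfun_perturbation_inverse_diff:
  fixes M N B B' :: "'a \<Rightarrow>\<^sub>L 'a"
  assumes "\<And>v. M (A v + B v) = v" "\<And>w. A (N w) + B' (N w) = w"
  shows "M - N = M o\<^sub>L (B' - B) o\<^sub>L N"
proof (rule blinfun_eqI)
  fix w
  have "M w - N w = M (A (N w) + B' (N w)) - M (A (N w) + B (N w))"
    using assms by simp
  then show "(M - N) w = (M o\<^sub>L (B' - B) o\<^sub>L N) w"
    by (simp add: blinfun.bilinear_simps)
qed

lemma
  assumes "C2b q" "C2b p" "supn (Dop q) \<le> L" "supn (Dop p) \<le> L"
  shows C2b_norm_inv_add_diff_le_supn:
      "norm (inv (\<lambda>x. A x + q x) y - inv (\<lambda>x. A x + p x) y) \<le> lip_inv * supn (\<lambda>x. q x - p x)"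
    and C2b_norm_inv_add_diff_le_norm1:
      "norm (inv (\<lambda>x. A x + q x) y - inv (\<lambda>x. A x + p x) y) \<le> lip_inv * norm1 (\<lambda>x. q x - p x)"
proof -
  have lip: "norm (q a - q b) \<le> L * norm (a - b)" "norm (p a - p b) \<le> L * norm (a - b)" for a b
    using assms by (simp_all add: C2b_lipschitz_le)
  show "norm (inv (\<lambda>x. A x + q x) y - inv (\<lambda>x. A x + p x) y) \<le> lip_inv * supn (\<lambda>x. q x - p x)"
    using assms by (intro norm_inv_add_diff_le lip C2b_diff_le_supn)
  show "norm (inv (\<lambda>x. A x + q x) y - inv (\<lambda>x. A x + p x) y) \<le> lip_inv * norm1 (\<lambda>x. q x - p x)"
    using assms by (intro norm_inv_add_diff_le lip C2b_diff_le_norm1)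
qed

lemma norm_Dop_inv_add_diff_le:
  fixes M N :: "'a \<Rightarrow>\<^sub>L 'a"
  assumes q: "C2b q" and p: "C2b p" and Dq: "supn (Dop q) \<le> L" and Dp: "supn (Dop p) \<le> L"
    and D2p: "supn (Dop (Dop p)) \<le> \<delta>"
    and M: "norm M \<le> lip_inv" "\<And>v. M (A v + Dop q (inv (\<lambda>x. A x + q x) y) v) = v"
    and N: "norm N \<le> lip_inv" "\<And>w. A (N w) + Dop p (inv (\<lambda>x. A x + p x) y) (N w) = w"
  shows "norm (M - N) \<le> lip_inv * (1 + lip_inv * \<delta>) * norm1 (\<lambda>x. q x - p x) * lip_inv"
proof -
  let ?B = "Dop q (inv (\<lambda>x. A x + q x) y)" and ?B' = "Dop p (inv (\<lambda>x. A x + p x) y)"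
  let ?d = "norm1 (\<lambda>x. q x - p x)"
  have "0 \<le> \<delta>"
    using order_trans[OF C2b_supn_Dop2_nonneg[OF p] D2p] .
  then have "norm (?B - ?B') \<le> ?d + \<delta> * (lip_inv * ?d)"
    using q p Dq Dp D2p
    by (intro norm_diff_two_points_le C2b_Dop_diff_le_norm1 C2b_Dop_lipschitz_le
        C2b_norm_inv_add_diff_le_norm1)
  then have B: "norm (?B' - ?B) \<le> (1 + lip_inv * \<delta>) * ?d"
    by (simp add: norm_minus_commute algebra_simps)
  have "norm (M - N) \<le> norm M * norm (?B' - ?B) * norm N"
    unfolding blinfun_perturbation_inverse_diff[OF M(2) N(2)]
    by (meson norm_blinfun_compose mult_right_mono norm_ge_zero order_trans)
  also have "\<dots> \<le> lip_inv * ((1 + lip_inv * \<delta>) * ?d) * lip_inv"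
    using M(1) N(1) B lip_inv_nonneg order_trans[OF norm_ge_zero B] by (intro mult_mono) auto
  finally show ?thesis
    by (simp add: mult.assoc)
qed

lemma supn_comp_inv_add_diff_le:
  assumes q: "C2b q" and p: "C2b p" and Dq: "supn (Dop q) \<le> L" and Dp: "supn (Dop p) \<le> L"
    and h: "C2b h" and f1: "C2b f1" and f2: "C2b f2"
  shows "supn (\<lambda>y. h (f1 (inv (\<lambda>x. A x + q x) y)) - h (f2 (inv (\<lambda>x. A x + p x) y)))
    \<le> supn (Dop h) * (supn (\<lambda>x. f1 x - f2 x) + lip_inv * supn (Dop f2) * supn (\<lambda>x. q x - p x))"
    (is "supn _ \<le> ?R")
proof (rule supn_least)
  fix y
  define x x' where "x = inv (\<lambda>x. A x + q x) y" and "x' = inv (\<lambda>x. A x + p x) y"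
  have "norm (x - x') \<le> lip_inv * supn (\<lambda>x. q x - p x)"
    unfolding x_def x'_def using q p Dq Dp by (rule C2b_norm_inv_add_diff_le_supn)
  then have "norm (f1 x - f2 x')
      \<le> supn (\<lambda>x. f1 x - f2 x) + supn (Dop f2) * (lip_inv * supn (\<lambda>x. q x - p x))"
    using f1 f2 by (intro norm_diff_two_points_le C2b_diff_le_supn C2b_lipschitz C2b_supn_Dop_nonneg)
  then have "norm (h (f1 x) - h (f2 x'))
      \<le> supn (Dop h) * (supn (\<lambda>x. f1 x - f2 x) + supn (Dop f2) * (lip_inv * supn (\<lambda>x. q x - p x)))"
    using h by (meson C2b_lipschitz C2b_supn_Dop_nonneg mult_left_mono order_trans)
  then show "norm (h (f1 x) - h (f2 x')) \<le> ?R"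
    by (simp add: algebra_simps)
qed

lemma supn_Dop_comp_inv_add_diff_le:
  assumes q: "C2b q" and p: "C2b p" and Dq: "supn (Dop q) \<le> L" and Dp: "supn (Dop p) \<le> L"
    and D2p: "supn (Dop (Dop p)) \<le> \<delta>" and h: "C2b h" and f1: "C2b f1" and f2: "C2b f2"
  shows "supn (\<lambda>y. Dop (\<lambda>y. h (f1 (inv (\<lambda>x. A x + q x) y))) y
      - Dop (\<lambda>y. h (f2 (inv (\<lambda>x. A x + p x) y))) y)
    \<le> lip_inv * (supn (Dop h) + supn (Dop (Dop h)) * supn (Dop f2)) * norm1 (\<lambda>x. f1 x - f2 x)
      + lip_inv^2 * (supn (Dop (Dop h)) * (supn (Dop f2))^2 + supn (Dop h) * supn (Dop (Dop f2)))
          * norm1 (\<lambda>x. q x - p x)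
      + lip_inv^2 * supn (Dop h) * supn (Dop f1) * (1 + lip_inv * \<delta>) * norm1 (\<lambda>x. q x - p x)"
    (is "supn _ \<le> ?R")
proof (rule supn_least)
  fix y
  define K Ph Ph2 F1 F2 F22 nf nr
    where "K = lip_inv" and "Ph = supn (Dop h)" and "Ph2 = supn (Dop (Dop h))"
      and "F1 = supn (Dop f1)" and "F2 = supn (Dop f2)" and "F22 = supn (Dop (Dop f2))"
      and "nf = norm1 (\<lambda>x. f1 x - f2 x)" and "nr = norm1 (\<lambda>x. q x - p x)"
  define x x' where "x = inv (\<lambda>x. A x + q x) y" and "x' = inv (\<lambda>x. A x + p x) y"
  obtain M where DG1: "Dop (\<lambda>y. h (f1 (inv (\<lambda>x. A x + q x) y))) y = Dop h (f1 x) o\<^sub>L Dop f1 x o\<^sub>L M"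
    and M: "norm M \<le> K" "\<And>v. M (A v + Dop q x v) = v"
    by (rule Dop_comp_inv_add[OF q Dq f1 h, of y]) (simp add: K_def x_def)
  obtain N where DG2: "Dop (\<lambda>y. h (f2 (inv (\<lambda>x. A x + p x) y))) y = Dop h (f2 x') o\<^sub>L Dop f2 x' o\<^sub>L N"
    and N: "norm N \<le> K" "\<And>w. A (N w) + Dop p x' (N w) = w"
    by (rule Dop_comp_inv_add[OF p Dp f2 h, of y]) (simp add: K_def x'_def)
  have xx': "norm (x - x') \<le> K * nr"
    unfolding x_def x'_def K_def nr_def using q p Dq Dp by (rule C2b_norm_inv_add_diff_le_norm1)
  have MN: "norm (M - N) \<le> K * (1 + K * \<delta>) * nr * K"
    unfolding K_def nr_def
    by (rule norm_Dop_inv_add_diff_le[OF q p Dq Dp D2p M[unfolded K_def x_def] N[unfolded K_def x'_def]])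
  have Df: "norm (Dop f1 x - Dop f2 x') \<le> nf + F22 * (K * nr)"
    unfolding nf_def F22_def using f1 f2 xx'
    by (intro norm_diff_two_points_le C2b_Dop_diff_le_norm1 C2b_Dop_lipschitz C2b_supn_Dop2_nonneg)
      (auto simp: F22_def)
  have "norm (f1 x - f2 x') \<le> nf + F2 * (K * nr)"
    unfolding nf_def F2_def using f1 f2 xx'
    by (intro norm_diff_two_points_le C2b_diff_le_norm1 C2b_lipschitz C2b_supn_Dop_nonneg)
      (auto simp: F2_def)
  then have Dh: "norm (Dop h (f1 x) - Dop h (f2 x')) \<le> Ph2 * (nf + F2 * (K * nr))"
    using h unfolding Ph2_def
    by (meson C2b_Dop_lipschitz C2b_supn_Dop2_nonneg mult_left_mono order_trans)
  have "norm ((Dop h (f1 x) o\<^sub>L Dop f1 x o\<^sub>L M) - (Dop h (f2 x') o\<^sub>L Dop f2 x' o\<^sub>L N))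
      \<le> Ph * F1 * (K * (1 + K * \<delta>) * nr * K) + Ph * (nf + F22 * (K * nr)) * K
        + Ph2 * (nf + F2 * (K * nr)) * F2 * K"
    using MN Df Dh N(1) h f1 f2 unfolding Ph_def F1_def F2_def
    by (intro norm_blinfun_compose3_diff_le C2b_norm_Dop_le_supn)
  also have "\<dots> = ?R"
    unfolding K_def Ph_def Ph2_def F1_def F2_def F22_def nf_def nr_def
    by (simp add: algebra_simps power2_eq_square)
  finally show "norm (Dop (\<lambda>y. h (f1 (inv (\<lambda>x. A x + q x) y))) y
      - Dop (\<lambda>y. h (f2 (inv (\<lambda>x. A x + p x) y))) y) \<le> ?R"
    unfolding DG1 DG2 .
qed

end

theorem lemma3p7:
  fixes Ac Ai :: "'c::banach \<Rightarrow>\<^sub>L 'c"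
    and Lg Lc :: real
    and r rt :: "'c \<Rightarrow> 'c"
    and h :: "'y::banach \<Rightarrow> 'x::banach"
    and f1 f2 :: "'c \<Rightarrow> 'y"
  assumes inv1: "Ac o\<^sub>L Ai = id_blinfun" and inv2: "Ai o\<^sub>L Ac = id_blinfun"
    and Lg: "0 \<le> Lg" and Lc0: "0 \<le> Lc" and Lc1: "Lc < 1"
    and Lr_small: "norm Ai * Lr_const Lg Lc (norm Ac) < 1"
    and r: "C2b r" and rt: "C2b rt"
    and Dr: "supn (Dop r) \<le> Lr_const Lg Lc (norm Ac)"
    and Drt: "supn (Dop rt) \<le> Lr_const Lg Lc (norm Ac)"
    and h: "C2b h" and f1: "C2b f1" and f2: "C2b f2"
  shows
   "(let Lr = Lr_const Lg Lc (norm Ac); L1 = Lm1_const (norm Ai) Lr;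
         Phi = inv (\<lambda>x. Ac x + r x); Psi = inv (\<lambda>x. Ac x + rt x);
         G1 = (\<lambda>x. h (f1 (Phi x))); G2 = (\<lambda>x. h (f2 (Psi x)))
     in supn (\<lambda>x. G1 x - G2 x)
          \<le> supn (Dop h) * (supn (\<lambda>x. f1 x - f2 x) + L1 * supn (Dop f2) * supn (\<lambda>x. r x - rt x))
      \<and> (\<forall>\<delta>>0. supn (Dop (Dop rt)) \<le> \<delta> \<longrightarrow>
           supn (\<lambda>x. Dop G1 x - Dop G2 x)
           \<le> L1 * (supn (Dop h) + supn (Dop (Dop h)) * supn (Dop f2)) * norm1 (\<lambda>x. f1 x - f2 x)
             + L1^2 * (supn (Dop (Dop h)) * (supn (Dop f2))^2 + supn (Dop h) * supn (Dop (Dop f2)))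
                 * norm1 (\<lambda>x. r x - rt x)
             + L1^2 * supn (Dop h) * supn (Dop f1) * (1 + L1 * \<delta>) * norm1 (\<lambda>x. r x - rt x)))"
proof -
  define Lr where "Lr = Lr_const Lg Lc (norm Ac)"
  have "0 \<le> Lr"
    unfolding Lr_def Lr_const_def using Lg Lc0 Lc1 by simp
  then interpret lipschitz_perturbation Ac Ai Lr
    using inv1 inv2 Lr_small by unfold_locales (simp_all add: Lr_def)
  have L1: "Lm1_const (norm Ai) Lr = lip_inv"
    unfolding Lm1_const_def Lt_const_def lip_inv_def using L_small
    by (simp add: field_simps power2_eq_square)
  show ?thesis
    unfolding Let_def Lr_def[symmetric] L1
    using supn_comp_inv_add_diff_le[OF r rt Dr[folded Lr_def] Drt[folded Lr_def] h f1 f2]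
      supn_Dop_comp_inv_add_diff_le[OF r rt Dr[folded Lr_def] Drt[folded Lr_def] _ h f1 f2]
    by blast
qed

end
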